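(* Let $0<a<1$, $\alpha\in(0,1]$ and $b=a^{1/\alpha}$. Let $\{X(t),t\ge 0\}$ be a Lévy process taking values in $I_0=\{0,1,2,\dots\}$. Then $\{X(t)\}$ is $I_0$-valued $(a,\tfrac{1}{\alpha})$-semi-selfsimilar if and only if the distribution of $X(1)$ is $I_0$-valued (discrete) semi-stable$(a,b)$.
   Context: A Lévy process is a process with stationary and independent increments and $X(0)=0$; if $P(s)$ is the probability generating function (PGF) of $X(1)$ then the PGF of $X(t)$ is $P(s)^t$. Binomial thinning: for $0<c<1$ and an $I_0$-valued random variable $X$, $c\otimes X=\sum_{i=1}^{X} Z_i$, where $\{Z_i\}$ are i.i.d. Bernoulli variables independent of $X$ with $P\{Z_i=1\}=c$; if $X$ has PGF $P(s)$ then $c\otimes X$ has PGF $P(1-c+cs)$. An $I_0$-valued process $\{X(t),t\ge0\}$ is $(a,H)$-semi-selfsimilar (SSS), with $0<a<1$ and $H>0$, if $\{X(at)\}\overset{d}{=}\{a^H\otimes X(t)\}$ (the thinning applied to $X(t)$ with a Bernoulli sequence independent of the process). An $I_0$-valued random variable with PGF $P(s)$ is discrete semi-stable$(a,b)$ if $P(s)\neq 0$ and $\{P(s)\}^a=P(1-b+bs)$ for all $0\le s\le 1$, where $0<b<1$ and $b=a^{1/\alpha}$ for some $\alpha\in(0,1]$. Semi-stability and semi-selfsimilarity are meant in the strict sense. *)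

theory Defs
  imports "HOL-Probability.Probability"
begin

fun bern_list :: "real \<Rightarrow> nat \<Rightarrow> bool list pmf" where
  "bern_list c 0 = return_pmf []"
| "bern_list c (Suc n) =
     bind_pmf (bernoulli_pmf c) (\<lambda>z. map_pmf (Cons z) (bern_list c n))"

text \<open>Joint law of the binomial thinnings (c \<otimes> x_1, ..., c \<otimes> x_k) of given values
  x_1, ..., x_k, all using ONE common Bernoulli(c) sequence Z_1, Z_2, ...:
  c \<otimes> x = Z_1 + ... + Z_x.\<close>
definition thin_vec :: "real \<Rightarrow> nat list \<Rightarrow> nat list pmf" where
  "thin_vec c xs =
     map_pmf (\<lambda>zs. map (\<lambda>x. length (filter id (take x zs))) xs)
             (bern_list c (if xs = [] then 0 else Max (set xs)))"

definition fdd :: "'a measure \<Rightarrow> (real \<Rightarrow> 'a \<Rightarrow> nat) \<Rightarrow> real list \<Rightarrow> nat list measure" where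
  "fdd M X ts = distr M (count_space UNIV) (\<lambda>\<omega>. map (\<lambda>t. X t \<omega>) ts)"

definition levy_process :: "'a measure \<Rightarrow> (real \<Rightarrow> 'a \<Rightarrow> nat) \<Rightarrow> bool" where
  "levy_process M X \<longleftrightarrow>
     (\<forall>t\<ge>0. X t \<in> M \<rightarrow>\<^sub>M count_space UNIV) \<and>
     (AE \<omega> in M. X 0 \<omega> = 0) \<and>
     (\<forall>s t. 0 \<le> s \<longrightarrow> s \<le> t \<longrightarrow>
        distr M (count_space UNIV) (\<lambda>\<omega>. int (X t \<omega>) - int (X s \<omega>)) =
        distr M (count_space UNIV) (\<lambda>\<omega>. int (X (t - s) \<omega>))) \<and>
     (\<forall>(n::nat) (\<tau>::nat \<Rightarrow> real). 0 \<le> \<tau> 0 \<longrightarrow> (\<forall>i<n. \<tau> i < \<tau> (Suc i)) \<longrightarrow>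
        prob_space.indep_vars M (\<lambda>_. count_space UNIV)
          (\<lambda>i \<omega>. int (X (\<tau> (Suc i)) \<omega>) - int (X (\<tau> i) \<omega>)) {..<n})"

text \<open>(a,H)-semi-selfsimilarity: {X(at)} =d {a^H \<otimes> X(t)} (equality of all
  finite-dimensional distributions; the thinning uses a Bernoulli sequence
  independent of the process).\<close>
definition semi_selfsimilar :: "'a measure \<Rightarrow> (real \<Rightarrow> 'a \<Rightarrow> nat) \<Rightarrow> real \<Rightarrow> real \<Rightarrow> bool" where
  "semi_selfsimilar M X a H \<longleftrightarrow>
     (\<forall>ts. (\<forall>t\<in>set ts. 0 \<le> t) \<longrightarrow>
        fdd M X (map (\<lambda>t. a * t) ts) =
        fdd M X ts \<bind> (\<lambda>xs. measure_pmf (thin_vec (a powr H) xs)))"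

definition pgf :: "nat measure \<Rightarrow> real \<Rightarrow> real" where
  "pgf \<mu> s = (\<integral>k. s ^ k \<partial>\<mu>)"

definition discrete_semistable :: "real \<Rightarrow> real \<Rightarrow> nat measure \<Rightarrow> bool" where
  "discrete_semistable a b \<mu> \<longleftrightarrow>
     (\<forall>s\<in>{0..1}. pgf \<mu> s \<noteq> 0 \<and> pgf \<mu> s powr a = pgf \<mu> (1 - b + b * s))"

end

(* For a Levy process the law of X(t) has generating function P(s)^t, where P is the
   generating function of X(1): t |-> P(s)^t is multiplicative and monotone in t.  Since
   thinning by b turns a generating function Q(s) into Q(1 - b + b s), and generating
   functions determine laws, the one-dimensional scaling X(a t) =d b (x) X(t) for all t is
   equivalent to P(s)^a = P(1 - b + b s), i.e. to semi-stability of X(1), with b = a^(1/alpha).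
   The one-dimensional scaling already yields semi-selfsimilarity: every finite-dimensional
   distribution is an image of the independent increments, and thinning the partial sums
   with one common Bernoulli sequence is the same as thinning each increment independently. *)

theory Submission
  imports Defs
begin

section \<open>Increments, partial sums and independent lists\<close>

fun increments :: "'a::minus list \<Rightarrow> 'a list" where
  "increments (x # y # zs) = (y - x) # increments (y # zs)"
| "increments _ = []"

fun partial_sums :: "'a::monoid_add list \<Rightarrow> 'a list" where
  "partial_sums [] = []"
| "partial_sums (x # xs) = x # map ((+) x) (partial_sums xs)"

lemma length_increments [simp]: "length (increments xs) = length xs - 1"
  by (induction xs rule: increments.induct) auto

lemma nth_increments:
  "Suc i < length xs \<Longrightarrow> increments xs ! i = xs ! Suc i - xs ! i"
  by (induction xs arbitrary: i rule: increments.induct) (auto simp: nth_Cons split: nat.split)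

lemma increments_map_mult:
  "increments (map ((*) c) xs) = map ((*) c) (increments (xs :: 'a::ring list))"
  by (induction xs rule: increments.induct) (auto simp: right_diff_distrib)

lemma increments_nonneg:
  "sorted xs \<Longrightarrow> d \<in> set (increments xs) \<Longrightarrow> 0 \<le> (d :: 'a::linordered_ab_group_add)"
  by (induction xs rule: increments.induct) auto

lemma partial_sums_increments:
  "sorted (x # xs) \<Longrightarrow> partial_sums (increments (x # xs)) = map (\<lambda>y. y - x) (xs :: nat list)"
  by (induction xs arbitrary: x) auto

lemma partial_sums_le_sum_list: "y \<in> set (partial_sums xs) \<Longrightarrow> y \<le> sum_list (xs :: nat list)"
  by (induction xs arbitrary: y) auto

text \<open>Values at the times \<open>ts\<close> of a path sampled as \<open>ys\<close> at the times \<open>us\<close>; a time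
  outside \<open>us\<close> reads as 0, the almost sure value of the process at time 0.\<close>
definition values_at :: "'a list \<Rightarrow> 'b::zero list \<Rightarrow> 'a list \<Rightarrow> 'b list" where
  "values_at us ys ts = map (\<lambda>t. case map_of (zip us ys) t of None \<Rightarrow> 0 | Some y \<Rightarrow> y) ts"

lemma values_at_map:
  "(\<And>t. t \<in> set ts \<Longrightarrow> t \<notin> set us \<Longrightarrow> f t = 0) \<Longrightarrow> values_at us (map f us) ts = map f ts"
  by (auto simp: values_at_def map_of_zip_map)

lemma values_at_map_inj:
  "inj f \<Longrightarrow> values_at (map f us) ys (map f ts) = values_at us ys ts"
proof -
  assume "inj f"
  then have "map_of (zip (map f us) ys) (f t) = map_of (zip us ys) t" for t
    by (induction us arbitrary: ys) (auto simp: zip_Cons1 dest: injD split: list.split)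
  then show ?thesis by (simp add: values_at_def)
qed

lemma map_values_at:
  "f 0 = 0 \<Longrightarrow> map f (values_at us ys ts) = values_at us (map f ys) ts"
proof -
  have "map_of (zip us (map f ys)) t = map_option f (map_of (zip us ys) t)" for t
    by (induction us arbitrary: ys) (auto simp: zip_Cons1 split: list.split)
  then show "f 0 = 0 \<Longrightarrow> ?thesis" by (auto simp: values_at_def split: option.split)
qed

lemma set_values_at_subset: "set (values_at us ys ts) \<subseteq> insert 0 (set ys)"
  by (auto simp: values_at_def split: option.splits dest!: map_of_SomeD set_zip_rightD)

fun indep_list_pmf :: "'a pmf list \<Rightarrow> 'a list pmf" where
  "indep_list_pmf [] = return_pmf []"
| "indep_list_pmf (p # ps) = bind_pmf p (\<lambda>x. map_pmf (Cons x) (indep_list_pmf ps))"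

lemma indep_list_pmf_Cons_pair:
  "indep_list_pmf (p # ps) = map_pmf (\<lambda>(x, xs). x # xs) (pair_pmf p (indep_list_pmf ps))"
  by (simp add: pair_pmf_def map_bind_pmf map_pmf_def bind_assoc_pmf bind_return_pmf)

lemma pmf_indep_list_pmf:
  "pmf (indep_list_pmf ps) xs =
     (if length xs = length ps then \<Prod>i<length ps. pmf (ps ! i) (xs ! i) else 0)"
proof (induction ps arbitrary: xs)
  case Nil
  then show ?case by (simp add: pmf_return)
next
  case (Cons p ps)
  show ?case
  proof (cases xs)
    case Nil
    then show ?thesis by (auto simp: pmf_eq_0_set_pmf)
  next
    case (Cons x xs')
    have "inj (\<lambda>(x :: 'a, xs). x # xs)"
      by (simp add: inj_def)
    then have "pmf (indep_list_pmf (p # ps)) (x # xs') = pmf p x * pmf (indep_list_pmf ps) xs'"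
      by (metis (no_types, lifting) indep_list_pmf_Cons_pair case_prod_conv pmf_map_inj' pmf_pair)
    then show ?thesis
      using Cons Cons.IH[of xs'] by (simp add: prod.lessThan_Suc_shift del: prod.lessThan_Suc)
  qed
qed

lemma bind_indep_list_pmf:
  "bind_pmf (indep_list_pmf ps) (\<lambda>xs. indep_list_pmf (map K xs)) =
     indep_list_pmf (map (\<lambda>p. bind_pmf p K) ps)"
proof (induction ps)
  case Nil
  then show ?case by (simp add: bind_return_pmf)
next
  case (Cons p ps)
  have "bind_pmf (indep_list_pmf (p # ps)) (\<lambda>xs. indep_list_pmf (map K xs)) =
      bind_pmf p (\<lambda>x. bind_pmf (indep_list_pmf ps)
        (\<lambda>xs. bind_pmf (K x) (\<lambda>y. map_pmf (Cons y) (indep_list_pmf (map K xs)))))"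
    by (simp add: bind_assoc_pmf bind_map_pmf)
  also have "\<dots> = bind_pmf p (\<lambda>x. bind_pmf (K x)
      (\<lambda>y. map_pmf (Cons y) (bind_pmf (indep_list_pmf ps) (\<lambda>xs. indep_list_pmf (map K xs)))))"
    by (simp add: bind_commute_pmf[of "indep_list_pmf ps"] map_bind_pmf)
  finally show ?case
    by (simp add: Cons.IH bind_assoc_pmf)
qed

section \<open>Binomial thinning\<close>

definition successes :: "nat \<Rightarrow> bool list \<Rightarrow> nat" where
  "successes x zs = length (filter id (take x zs))"

definition binomial_thin :: "real \<Rightarrow> nat \<Rightarrow> nat pmf" where
  "binomial_thin c x = map_pmf (successes x) (bern_list c x)"

lemma successes_0 [simp]: "successes 0 zs = 0"
  by (simp add: successes_def)

lemma successes_Suc_Cons: "successes (Suc x) (z # zs) = of_bool z + successes x zs"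
  by (simp add: successes_def)

lemma successes_append:
  "length zs = n \<Longrightarrow> successes (n + x) (zs @ zs') = successes n zs + successes x zs'"
  by (simp add: successes_def)

lemma successes_append_le: "x \<le> length zs \<Longrightarrow> successes x (zs @ zs') = successes x zs"
  by (simp add: successes_def)

lemma successes_take: "x \<le> m \<Longrightarrow> successes x (take m zs) = successes x zs"
  by (simp add: successes_def min_absorb1)

lemma length_bern_list: "zs \<in> set_pmf (bern_list c n) \<Longrightarrow> length zs = n"
  by (induction n arbitrary: zs) auto

lemma bern_list_add:
  "bern_list c (n + k) = map_pmf (\<lambda>(zs, zs'). zs @ zs') (pair_pmf (bern_list c n) (bern_list c k))"
  by (induction n) (simp_all add: pair_return_pmf1 pmf.map_comp o_def pair_pmf_def map_pmf_def
      bind_assoc_pmf bind_return_pmf bind_return_pmf')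

lemma map_take_bern_list:
  assumes "m \<le> n"
  shows "map_pmf (take m) (bern_list c n) = bern_list c m"
proof -
  obtain k where n: "n = m + k"
    using assms le_Suc_ex by blast
  have "map_pmf (take m) (bern_list c n) = map_pmf fst (pair_pmf (bern_list c m) (bern_list c k))"
    unfolding n bern_list_add pmf.map_comp
    by (rule map_pmf_cong) (auto dest: length_bern_list)
  then show ?thesis
    by (simp add: map_fst_pair_pmf)
qed

lemma thin_vec_eq_bern_list:
  assumes "\<forall>x\<in>set xs. x \<le> n"
  shows "thin_vec c xs = map_pmf (\<lambda>zs. map (\<lambda>x. successes x zs) xs) (bern_list c n)"
proof -
  define m where "m = (if xs = [] then 0 else Max (set xs))"
  have "m \<le> n" "\<forall>x\<in>set xs. x \<le> m"
    using assms by (auto simp: m_def)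
  then have "map_pmf (\<lambda>zs. map (\<lambda>x. successes x zs) xs) (bern_list c n) =
      map_pmf (\<lambda>zs. map (\<lambda>x. successes x zs) xs) (map_pmf (take m) (bern_list c n))"
    by (auto simp: pmf.map_comp o_def successes_take intro!: map_pmf_cong)
  also have "\<dots> = thin_vec c xs"
    unfolding map_take_bern_list[OF \<open>m \<le> n\<close>] by (simp add: thin_vec_def successes_def m_def)
  finally show ?thesis by (rule sym)
qed

lemma thin_vec_single: "thin_vec c [x] = map_pmf (\<lambda>y. [y]) (binomial_thin c x)"
  by (simp add: thin_vec_eq_bern_list[of "[x]" x] binomial_thin_def pmf.map_comp o_def)

lemma thin_vec_values_at:
  "thin_vec c (values_at us ys ts) = map_pmf (\<lambda>zs. values_at us zs ts) (thin_vec c ys)"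
proof -
  define n where "n = (if ys = [] then 0 else Max (set ys))"
  have ys: "\<forall>y\<in>set ys. y \<le> n"
    by (simp add: n_def)
  then have "\<forall>x\<in>set (values_at us ys ts). x \<le> n"
    using set_values_at_subset by fastforce
  then show ?thesis
    by (simp add: thin_vec_eq_bern_list[OF ys] thin_vec_eq_bern_list pmf.map_comp o_def
        map_values_at)
qed

text \<open>Cutting one Bernoulli sequence into consecutive blocks of lengths \<open>ds\<close> thins the
  entries of \<open>ds\<close> independently.\<close>
lemma thin_vec_partial_sums:
  "thin_vec c (partial_sums ds) = map_pmf partial_sums (indep_list_pmf (map (binomial_thin c) ds))"
proof -
  have "map_pmf (\<lambda>zs. map (\<lambda>x. successes x zs) (partial_sums ds)) (bern_list c (sum_list ds)) =
      map_pmf partial_sums (indep_list_pmf (map (binomial_thin c) ds))"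
  proof (induction ds)
    case Nil
    then show ?case by simp
  next
    case (Cons d ds)
    define F where "F = (\<lambda>zs. map (\<lambda>x. successes x zs) (partial_sums ds))"
    have "map_pmf (\<lambda>zs. map (\<lambda>x. successes x zs) (partial_sums (d # ds)))
          (bern_list c (sum_list (d # ds))) =
        map_pmf (\<lambda>(zs, zs'). successes d zs # map ((+) (successes d zs)) (F zs'))
          (pair_pmf (bern_list c d) (bern_list c (sum_list ds)))"
      unfolding sum_list.Cons bern_list_add pmf.map_comp
      by (rule map_pmf_cong)
        (auto dest!: length_bern_list simp: successes_append successes_append_le F_def)
    also have "\<dots> = map_pmf (\<lambda>(e, v). e # map ((+) e) v)
        (pair_pmf (binomial_thin c d) (map_pmf F (bern_list c (sum_list ds))))"
      by (simp add: binomial_thin_def map_pair[symmetric] pmf.map_comp o_def case_prod_unfold)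
    also have "\<dots> = map_pmf (\<lambda>(e, v). e # map ((+) e) v)
        (pair_pmf (binomial_thin c d)
          (map_pmf partial_sums (indep_list_pmf (map (binomial_thin c) ds))))"
      by (simp only: F_def Cons.IH)
    also have "\<dots> = map_pmf partial_sums (indep_list_pmf (map (binomial_thin c) (d # ds)))"
      by (simp add: indep_list_pmf_Cons_pair pair_map_pmf2 pmf.map_comp o_def case_prod_unfold
          del: indep_list_pmf.simps)
    finally show ?case .
  qed
  moreover have "\<forall>x\<in>set (partial_sums ds). x \<le> sum_list ds"
    using partial_sums_le_sum_list by blast
  ultimately show ?thesis
    by (simp add: thin_vec_eq_bern_list)
qed

section \<open>Probability generating functions\<close>

lemma pgf_sums:
  assumes "\<bar>s\<bar> \<le> 1"
  shows "(\<lambda>k. pmf p k * s ^ k) sums pgf (measure_pmf p) s"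
proof -
  have "integrable (count_space UNIV) (\<lambda>k. pmf p k * s ^ k)"
  proof (rule Bochner_Integration.integrable_bound[OF integrable_pmf])
    show "AE k in count_space UNIV. norm (pmf p k * s ^ k) \<le> norm (pmf p k)"
      using assms by (auto simp: abs_mult power_abs intro!: mult_left_le power_le_one)
  qed auto
  moreover have "pgf (measure_pmf p) s = (\<integral>k. pmf p k * s ^ k \<partial>count_space UNIV)"
    unfolding pgf_def measure_pmf_eq_density by (subst integral_density) auto
  ultimately show ?thesis
    using sums_integral_count_space_nat by simp
qed

lemma pgf_bind_pmf:
  assumes "\<bar>s\<bar> \<le> 1"
  shows "pgf (measure_pmf (bind_pmf p f)) s = (\<integral>x. pgf (measure_pmf (f x)) s \<partial>measure_pmf p)"
  unfolding pgf_def measure_pmf_bind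
  by (rule integral_bind[where K="count_space UNIV" and B=1 and B'=1])
    (use assms in \<open>auto simp: power_abs intro!: power_le_one measure_pmf_in_subprob_algebra\<close>)

lemma pgf_return_pmf [simp]: "pgf (measure_pmf (return_pmf x)) s = s ^ x"
  by (simp add: pgf_def)

lemma pgf_sum_pair_pmf:
  assumes "\<bar>s\<bar> \<le> 1"
  shows "pgf (measure_pmf (map_pmf (\<lambda>(x, y). x + y) (pair_pmf p q))) s =
    pgf (measure_pmf p) s * pgf (measure_pmf q) s"
proof -
  have "map_pmf (\<lambda>(x, y). x + y) (pair_pmf p q) =
      bind_pmf p (\<lambda>x. bind_pmf q (\<lambda>y. return_pmf (x + y)))"
    by (simp add: pair_pmf_def map_bind_pmf bind_return_pmf)
  then show ?thesis
    using assms by (simp add: pgf_bind_pmf power_add) (simp add: pgf_def)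
qed

lemma pgf_map_pmf_plus: "pgf (measure_pmf (map_pmf ((+) m) p)) s = s ^ m * pgf (measure_pmf p) s"
  by (simp add: pgf_def power_add)

lemma pgf_binomial_thin:
  assumes "0 \<le> c" "c \<le> 1" "\<bar>s\<bar> \<le> 1"
  shows "pgf (measure_pmf (binomial_thin c d)) s = (1 - c + c * s) ^ d"
proof (induction d)
  case 0
  then show ?case by (simp add: binomial_thin_def)
next
  case (Suc d)
  have "binomial_thin c (Suc d) =
      bind_pmf (bernoulli_pmf c) (\<lambda>z. map_pmf ((+) (of_bool z)) (binomial_thin c d))"
    by (simp add: binomial_thin_def map_bind_pmf pmf.map_comp o_def successes_Suc_Cons)
  then have "pgf (measure_pmf (binomial_thin c (Suc d))) s =
      (\<integral>z. s ^ of_bool z * (1 - c + c * s) ^ d \<partial>measure_pmf (bernoulli_pmf c))"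
    using assms Suc by (simp add: pgf_bind_pmf pgf_map_pmf_plus)
  then show ?case
    using assms by (simp add: algebra_simps)
qed

lemma pgf_bind_binomial_thin:
  assumes "0 \<le> c" "c \<le> 1" "\<bar>s\<bar> \<le> 1"
  shows "pgf (measure_pmf (bind_pmf p (binomial_thin c))) s = pgf (measure_pmf p) (1 - c + c * s)"
  using assms by (simp add: pgf_bind_pmf pgf_binomial_thin) (simp add: pgf_def)

lemma thinning_point_bounds:
  fixes c s :: real
  assumes "0 < c" "c < 1" "0 \<le> s" "s \<le> 1"
  shows "0 < 1 - c + c * s" "1 - c + c * s \<le> 1"
  using assms mult_left_le[of s c] by (auto intro: add_pos_nonneg)

lemma pgf_nonneg: "0 \<le> s \<Longrightarrow> 0 \<le> pgf \<mu> s"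
  unfolding pgf_def by (rule integral_nonneg_AE) auto

lemma pgf_le_1:
  assumes "0 \<le> s" "s \<le> 1"
  shows "pgf (measure_pmf p) s \<le> 1"
proof -
  have "pgf (measure_pmf p) s \<le> (\<integral>k. 1 \<partial>measure_pmf p)"
    unfolding pgf_def using assms
    by (intro integral_mono measure_pmf.integrable_const_bound[where B=1])
      (auto intro!: power_le_one)
  then show ?thesis by simp
qed

lemma pgf_pos:
  assumes "0 < s" "s \<le> 1"
  shows "0 < pgf (measure_pmf p) s"
proof -
  obtain k where "k \<in> set_pmf p"
    using set_pmf_not_empty[of p] by blast
  moreover have sums: "(\<lambda>k. pmf p k * s ^ k) sums pgf (measure_pmf p) s"
    using assms by (intro pgf_sums) auto
  ultimately have "0 < (\<Sum>k. pmf p k * s ^ k)"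
    using assms by (intro suminf_pos2[where i=k]) (auto simp: sums_iff set_pmf_iff)
  then show ?thesis
    using sums by (simp add: sums_iff)
qed

lemma powser_sums_zero_imp_coeffs_zero:
  fixes a :: "nat \<Rightarrow> real"
  assumes "0 < r" and sums: "\<And>x. 0 < x \<Longrightarrow> x \<le> r \<Longrightarrow> (\<lambda>n. a n * x ^ n) sums 0"
  shows "a n = 0"
proof (induction n rule: less_induct)
  case (less n)
  define g where "g x = (\<Sum>k. a (k + n) * x ^ k)" for x :: real
  have shifted: "(\<lambda>k. a (k + n) * x ^ k) sums 0" if "0 < x" "x \<le> r" for x
  proof -
    have "(\<lambda>k. a (k + n) * x ^ (k + n)) sums 0"
      using sums[OF that] less by (subst sums_zero_iff_shift) auto
    then have "(\<lambda>k. x ^ n * (a (k + n) * x ^ k)) sums 0"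
      by (simp add: power_add algebra_simps)
    then show ?thesis
      using that sums_mult_D[of "x ^ n"] by fastforce
  qed
  have "isCont g 0"
    unfolding g_def using shifted[of r] \<open>0 < r\<close>
    by (intro isCont_powser[where K=r]) (auto simp: sums_iff)
  then have "(g \<longlongrightarrow> g 0) (at_right 0)"
    by (simp add: isCont_def filterlim_at_split)
  moreover have "eventually (\<lambda>x. g x = 0) (at_right 0)"
    using eventually_at_right_real[OF \<open>0 < r\<close>]
    by eventually_elim (use shifted in \<open>auto simp: g_def sums_iff\<close>)
  then have "(g \<longlongrightarrow> 0) (at_right 0)"
    by (rule tendsto_eventually)
  ultimately have "g 0 = 0"
    using tendsto_unique[OF trivial_limit_at_right_real] by blast
  then show ?case
    by (simp add: g_def)
qed

lemma pgf_inject: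
  assumes "\<And>s. 0 < s \<Longrightarrow> s \<le> 1 \<Longrightarrow> pgf (measure_pmf p) s = pgf (measure_pmf q) s"
  shows "p = q"
proof (rule pmf_eqI)
  fix k
  have "(\<lambda>n. (pmf p n - pmf q n) * s ^ n) sums 0" if "0 < s" "s \<le> 1" for s :: real
    using sums_diff[OF pgf_sums[of s p] pgf_sums[of s q]] that assms[OF that]
    by (simp add: left_diff_distrib)
  then have "pmf p k - pmf q k = 0"
    by (intro powser_sums_zero_imp_coeffs_zero[of 1]) auto
  then show "pmf p k = pmf q k"
    by simp
qed

section \<open>Multiplicative functions on the half-line\<close>

lemma additive_eq_linear_on_rationals:
  fixes h :: "real \<Rightarrow> real"
  assumes add: "\<And>t u. 0 \<le> t \<Longrightarrow> 0 \<le> u \<Longrightarrow> h (t + u) = h t + h u" and "0 < n"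
  shows "h (real m / real n) = real m / real n * h 1"
proof -
  have mult_nat: "h (real k * x) = real k * h x" if "0 \<le> x" for k x
  proof (induction k)
    case 0
    then show ?case using add[of 0 0] by simp
  next
    case (Suc k)
    have "h (real (Suc k) * x) = h (real k * x + x)"
      by (simp add: algebra_simps)
    then show ?case
      using Suc that by (simp add: add algebra_simps)
  qed
  have "h 1 = real n * h (1 / real n)" "h (real m / real n) = real m * h (1 / real n)"
    using mult_nat[of "1 / real n" n] mult_nat[of "1 / real n" m] \<open>0 < n\<close> by simp_all
  then show ?thesis
    using \<open>0 < n\<close> by (simp add: field_simps)
qed

lemma additive_antimono_eq_linear:
  fixes h :: "real \<Rightarrow> real"
  assumes add: "\<And>t u. 0 \<le> t \<Longrightarrow> 0 \<le> u \<Longrightarrow> h (t + u) = h t + h u"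
    and anti: "\<And>s t. 0 \<le> s \<Longrightarrow> s \<le> t \<Longrightarrow> h t \<le> h s"
    and "0 \<le> t"
  shows "h t = t * h 1"
proof -
  have frac: "h (real m / real n) = real m / real n * h 1" if "0 < n" for m n
    using add that by (rule additive_eq_linear_on_rationals)
  have h1: "h 1 \<le> 0"
    using anti[of 0 1] add[of 0 0] by simp
  have close: "\<bar>h t - t * h 1\<bar> \<le> - h 1 / real n" if "0 < n" for n
  proof -
    define m where "m = nat \<lfloor>real n * t\<rfloor>"
    have "real m \<le> real n * t" "real n * t < real m + 1"
      using \<open>0 \<le> t\<close> unfolding m_def by (simp_all add: of_nat_floor)
    then have lo: "real m / real n \<le> t" and hi: "t \<le> real (Suc m) / real n"
      using that by (simp_all add: field_simps)
    have "h (real (Suc m) / real n) \<le> h t" "h t \<le> h (real m / real n)"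
      using anti lo hi \<open>0 \<le> t\<close> by simp_all
    then have "real (Suc m) / real n * h 1 \<le> h t" "h t \<le> real m / real n * h 1"
      unfolding frac[OF that] .
    moreover have "real (Suc m) / real n * h 1 \<le> t * h 1" "t * h 1 \<le> real m / real n * h 1"
      using mult_right_mono_neg[OF lo h1] mult_right_mono_neg[OF hi h1] by simp_all
    moreover have "real (Suc m) / real n * h 1 = real m / real n * h 1 + h 1 / real n"
      by (simp add: add_divide_distrib distrib_right)
    ultimately show ?thesis
      unfolding abs_le_iff by linarith
  qed
  have "(\<lambda>n. - h 1 / real n) \<longlonglongrightarrow> 0"
    by (rule lim_const_over_n)
  then have "\<bar>h t - t * h 1\<bar> \<le> 0"
    by (rule LIMSEQ_le_const) (use close in \<open>auto intro!: exI[of _ 1]\<close>)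
  then show ?thesis
    by simp
qed

locale unit_interval_semigroup =
  fixes g :: "real \<Rightarrow> real"
  assumes mult: "\<And>t u. 0 \<le> t \<Longrightarrow> 0 \<le> u \<Longrightarrow> g (t + u) = g t * g u"
    and nonneg: "\<And>t. 0 \<le> t \<Longrightarrow> 0 \<le> g t"
    and le_1: "\<And>t. 0 \<le> t \<Longrightarrow> g t \<le> 1"
begin

lemma antimono: "0 \<le> s \<Longrightarrow> s \<le> t \<Longrightarrow> g t \<le> g s"
  using mult[of s "t - s"] nonneg[of s] le_1[of "t - s"] by (simp add: mult_left_le)

lemma Suc_mult_eq_power: "0 \<le> x \<Longrightarrow> g (real (Suc n) * x) = g x ^ Suc n"
proof (induction n)
  case (Suc n)
  have "g (real (Suc (Suc n)) * x) = g (real (Suc n) * x + x)"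
    by (simp add: algebra_simps)
  then show ?case
    using Suc by (simp add: mult)
qed simp

lemma eq_0_if_at_1_eq_0:
  assumes "g 1 = 0" "0 < t"
  shows "g t = 0"
proof -
  obtain n where n: "1 / real (Suc n) \<le> t"
    using \<open>0 < t\<close> by (metis nat_approx_posE less_eq_real_def)
  have "g (1 / real (Suc n)) = 0"
    using Suc_mult_eq_power[of "1 / real (Suc n)" n] assms(1) by auto
  then show ?thesis
    using mult[of "1 / real (Suc n)" "t - 1 / real (Suc n)"] n by simp
qed

lemma pos_if_at_1_pos:
  assumes "0 < g 1" "0 \<le> t"
  shows "0 < g t"
proof -
  obtain n :: nat where "t \<le> real n"
    using real_arch_simple by blast
  then have "t \<le> real (Suc n)"
    by simp
  then have "g (real (Suc n) * 1) \<le> g t"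
    using antimono \<open>0 \<le> t\<close> by simp
  moreover have "0 < g (real (Suc n) * 1)"
    using Suc_mult_eq_power[of 1 n] assms(1) by simp
  ultimately show ?thesis
    by simp
qed

text \<open>The degenerate case \<open>g 1 = 0\<close> is covered because \<open>0 powr t = 0\<close>.\<close>
lemma eq_powr:
  assumes "0 < t"
  shows "g t = g 1 powr t"
proof (cases "g 1 = 0")
  case True
  then show ?thesis
    using eq_0_if_at_1_eq_0 assms by simp
next
  case False
  then have pos: "0 \<le> t \<Longrightarrow> 0 < g t" for t
    using pos_if_at_1_pos nonneg[of 1] by fastforce
  have "ln (g (t + u)) = ln (g t) + ln (g u)" if "0 \<le> t" "0 \<le> u" for t u
    using pos[OF that(1)] pos[OF that(2)] that by (simp add: mult ln_mult)
  moreover have "ln (g u) \<le> ln (g s)" if "0 \<le> s" "s \<le> u" for s u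
    using antimono[OF that] pos that by simp
  ultimately have "ln (g t) = t * ln (g 1)"
    using assms by (intro additive_antimono_eq_linear[where h="\<lambda>t. ln (g t)"]) auto
  moreover have "g t = exp (ln (g t))"
    using pos assms by simp
  ultimately show ?thesis
    using pos[of 1] by (simp add: powr_def)
qed

end

section \<open>Integer-valued Levy processes\<close>

lemma map_pmf_inj_eq: "inj f \<Longrightarrow> map_pmf f p = map_pmf f q \<longleftrightarrow> p = q"
  by (metis inv_o_cancel pmf.map_comp pmf.map_id)

lemma measurable_count_space_binop:
  fixes f :: "'a \<Rightarrow> 'b::countable" and g :: "'a \<Rightarrow> 'c::countable"
  assumes "f \<in> M \<rightarrow>\<^sub>M count_space UNIV" "g \<in> M \<rightarrow>\<^sub>M count_space UNIV"
  shows "(\<lambda>\<omega>. h (f \<omega>) (g \<omega>)) \<in> M \<rightarrow>\<^sub>M count_space UNIV"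
  by (rule measurable_compose_countable'[where f="\<lambda>y \<omega>. h y (g \<omega>)" and g=f and I=UNIV])
    (auto intro: measurable_compose[OF assms(2)] assms(1))

lemma (in prob_space) prob_indep_vars_all_eq:
  assumes "indep_vars (\<lambda>_. count_space UNIV) Y I" "finite I"
  shows "prob {\<omega>\<in>space M. \<forall>i\<in>I. Y i \<omega> = y i} = (\<Prod>i\<in>I. prob {\<omega>\<in>space M. Y i \<omega> = y i})"
proof (cases "I = {}")
  case True
  then show ?thesis by (simp add: prob_space)
next
  case False
  have "{\<omega>\<in>space M. \<forall>i\<in>I. Y i \<omega> = y i} = (\<Inter>i\<in>I. Y i -` {y i} \<inter> space M)"
    using False by auto
  moreover have "Y i -` {y i} \<inter> space M = {\<omega>\<in>space M. Y i \<omega> = y i}" for i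
    by auto
  ultimately show ?thesis
    using indep_varsD_finite[OF assms(1) False assms(2), of "\<lambda>i. {y i}"] by simp
qed

locale nat_levy_process = prob_space M for M :: "'a measure" +
  fixes X :: "real \<Rightarrow> 'a \<Rightarrow> nat"
  assumes levy_process: "levy_process M X"
begin

lemma measurable_X: "0 \<le> t \<Longrightarrow> X t \<in> M \<rightarrow>\<^sub>M count_space UNIV"
  using levy_process unfolding levy_process_def by blast

lemma AE_X_0: "AE \<omega> in M. X 0 \<omega> = 0"
  using levy_process unfolding levy_process_def by blast

lemma distr_increment:
  "0 \<le> s \<Longrightarrow> s \<le> t \<Longrightarrow>
    distr M (count_space UNIV) (\<lambda>\<omega>. int (X t \<omega>) - int (X s \<omega>)) =
    distr M (count_space UNIV) (\<lambda>\<omega>. int (X (t - s) \<omega>))"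
  using levy_process unfolding levy_process_def by blast

lemma indep_increments:
  "0 \<le> \<tau> 0 \<Longrightarrow> (\<And>i. i < n \<Longrightarrow> \<tau> i < \<tau> (Suc i)) \<Longrightarrow>
    indep_vars (\<lambda>_. count_space UNIV) (\<lambda>i \<omega>. int (X (\<tau> (Suc i)) \<omega>) - int (X (\<tau> i) \<omega>)) {..<n}"
  using levy_process unfolding levy_process_def by blast

lemma measurable_increment:
  "0 \<le> s \<Longrightarrow> 0 \<le> t \<Longrightarrow> (\<lambda>\<omega>. int (X t \<omega>) - int (X s \<omega>)) \<in> M \<rightarrow>\<^sub>M count_space UNIV"
  by (rule measurable_count_space_binop[where h="\<lambda>m n. int m - int n"]) (simp_all add: measurable_X)

lemma measurable_X_list:
  "\<forall>t\<in>set ts. 0 \<le> t \<Longrightarrow> (\<lambda>\<omega>. map (\<lambda>t. X t \<omega>) ts) \<in> M \<rightarrow>\<^sub>M count_space UNIV"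
  by (induction ts) (auto intro!: measurable_count_space_binop[where h=Cons] measurable_X)

lemma AE_X_mono:
  assumes "0 \<le> s" "s \<le> t"
  shows "AE \<omega> in M. X s \<omega> \<le> X t \<omega>"
proof -
  let ?D = "\<lambda>\<omega>. int (X t \<omega>) - int (X s \<omega>)"
  have A: "{\<omega>\<in>space M. X t \<omega> < X s \<omega>} = ?D -` {z. z < 0} \<inter> space M"
    by auto
  have D: "?D \<in> M \<rightarrow>\<^sub>M count_space UNIV"
    using assms by (intro measurable_increment) auto
  have events: "{\<omega>\<in>space M. X t \<omega> < X s \<omega>} \<in> events"
    unfolding A by (rule measurable_sets[OF D]) simp
  have "prob {\<omega>\<in>space M. X t \<omega> < X s \<omega>} = measure (distr M (count_space UNIV) ?D) {z. z < 0}"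
    unfolding A by (rule measure_distr[OF D, symmetric]) simp
  also have "\<dots> = measure (distr M (count_space UNIV) (\<lambda>\<omega>. int (X (t - s) \<omega>))) {z. z < 0}"
    using assms by (simp add: distr_increment)
  also have "\<dots> = 0"
    using assms by (subst measure_distr) (auto intro: measurable_compose[OF measurable_X])
  finally have "AE \<omega> in M. \<omega> \<notin> {\<omega>\<in>space M. X t \<omega> < X s \<omega>}"
    using prob_eq_0[OF events] by blast
  with AE_space show ?thesis
    by eventually_elim auto
qed

lemma AE_sorted_X:
  assumes "\<forall>t\<in>set ts. 0 \<le> t" "sorted ts"
  shows "AE \<omega> in M. sorted (map (\<lambda>t. X t \<omega>) ts)"
proof -
  have "AE \<omega> in M. \<forall>s\<in>set ts. \<forall>t\<in>set ts. s \<le> t \<longrightarrow> X s \<omega> \<le> X t \<omega>"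
  proof (intro AE_finite_allI finite_set AE_impI)
    fix s t assume "s \<in> set ts" "s \<le> t"
    then show "AE \<omega> in M. X s \<omega> \<le> X t \<omega>"
      using assms(1) by (intro AE_X_mono) auto
  qed
  then show ?thesis
    by eventually_elim (use assms(2) in \<open>auto simp: sorted_map elim: sorted_wrt_mono_rel[rotated]\<close>)
qed

text \<open>Junk for \<open>t < 0\<close>, where \<open>X t\<close> need not be a random variable.\<close>
definition marginal :: "real \<Rightarrow> nat pmf" where
  "marginal t = Abs_pmf (distr M (count_space UNIV) (X t))"

lemma measure_pmf_marginal:
  assumes "0 \<le> t"
  shows "measure_pmf (marginal t) = distr M (count_space UNIV) (X t)"
proof -
  interpret D: prob_space "distr M (count_space UNIV) (X t)"
    using assms measurable_X by (intro prob_space_distr) auto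
  show ?thesis
    unfolding marginal_def
    by (intro Abs_pmf_inverse) (auto simp: D.prob_space_axioms D.AE_support_countable)
qed

lemma pmf_marginal: "0 \<le> t \<Longrightarrow> pmf (marginal t) k = prob {\<omega>\<in>space M. X t \<omega> = k}"
  using measurable_X[of t]
  by (simp add: pmf.rep_eq measure_pmf_marginal measure_distr vimage_def Int_def conj_commute)

lemma marginal_0: "marginal 0 = return_pmf 0"
proof -
  have "measure_pmf (marginal 0) = distr M (count_space UNIV) (\<lambda>_. 0)"
    unfolding measure_pmf_marginal[OF order_refl]
    by (rule distr_cong_AE[OF refl refl AE_X_0]) (auto intro: measurable_X)
  then show ?thesis
    by (simp add: return_pmf.rep_eq measure_pmf_inject flip: measure_pmf_inject)
qed

lemma prob_increment:
  assumes "0 \<le> s" "s \<le> t"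
  shows "prob {\<omega>\<in>space M. int (X t \<omega>) - int (X s \<omega>) = int k} = pmf (marginal (t - s)) k"
proof -
  have "prob {\<omega>\<in>space M. int (X t \<omega>) - int (X s \<omega>) = int k} =
      measure (distr M (count_space UNIV) (\<lambda>\<omega>. int (X (t - s) \<omega>))) {int k}"
    using assms measurable_increment
    by (simp add: measure_distr vimage_def Int_def conj_commute flip: distr_increment)
  also have "\<dots> = pmf (marginal (t - s)) k"
    using assms measurable_X[of "t - s"]
    by (simp add: pmf_marginal measure_distr vimage_def Int_def conj_commute)
  finally show ?thesis .
qed

lemma events_Collect_eq:
  "f \<in> M \<rightarrow>\<^sub>M count_space UNIV \<Longrightarrow> {\<omega>\<in>space M. f \<omega> = c} \<in> events"
  using measurable_sets[of f M "count_space UNIV" "{c}"]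
  by (simp add: vimage_def Int_def conj_commute)

lemma measurable_increments_X:
  "\<forall>t\<in>set ts. 0 \<le> t \<Longrightarrow> (\<lambda>\<omega>. increments (map (\<lambda>t. X t \<omega>) ts)) \<in> M \<rightarrow>\<^sub>M count_space UNIV"
  by (rule measurable_compose[OF measurable_X_list measurable_count_space])

lemma AE_increments_eq_iff:
  assumes "sorted ts" "\<forall>t\<in>set ts. 0 \<le> t" "length ds = length ts - 1"
  shows "AE \<omega> in M. increments (map (\<lambda>t. X t \<omega>) ts) = ds \<longleftrightarrow>
    (\<forall>i\<in>{..<length ts - 1}. int (X (ts ! Suc i) \<omega>) - int (X (ts ! i) \<omega>) = int (ds ! i))"
  using AE_sorted_X[OF assms(2,1)]
proof eventually_elim
  case (elim \<omega>)
  have "X (ts ! i) \<omega> \<le> X (ts ! Suc i) \<omega>" if "i < length ts - 1" for i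
    using sorted_nth_mono[OF elim, of i "Suc i"] that by simp
  then have "increments (map (\<lambda>t. X t \<omega>) ts) ! i = ds ! i \<longleftrightarrow>
      int (X (ts ! Suc i) \<omega>) - int (X (ts ! i) \<omega>) = int (ds ! i)" if "i < length ts - 1" for i
    using that by (simp add: nth_increments flip: of_nat_diff)
  then show ?case
    using assms(3) by (auto simp: list_eq_iff_nth_eq)
qed

lemma prob_increments:
  assumes "ts \<noteq> []" and sorted: "sorted_wrt (<) ts" and nonneg: "\<forall>t\<in>set ts. 0 \<le> t"
  shows "prob {\<omega>\<in>space M. increments (map (\<lambda>t. X t \<omega>) ts) = ds} =
    pmf (indep_list_pmf (map marginal (increments ts))) ds"
proof (cases "length ds = length ts - 1")
  case False
  then have "{\<omega>\<in>space M. increments (map (\<lambda>t. X t \<omega>) ts) = ds} = {}"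
    by auto
  then show ?thesis
    using False by (simp only:) (simp add: pmf_indep_list_pmf)
next
  case True
  define n where "n = length ts - 1"
  define D where "D i \<omega> = int (X (ts ! Suc i) \<omega>) - int (X (ts ! i) \<omega>)" for i \<omega>
  have ts_step: "ts ! i < ts ! Suc i" if "i < n" for i
    using sorted_wrt_nth_less[OF sorted, of i "Suc i"] that by (simp add: n_def)
  have ts_nonneg: "0 \<le> ts ! i" if "i \<le> n" for i
    using nonneg that \<open>ts \<noteq> []\<close> by (simp add: n_def less_eq_iff_succ_less)
  have indep: "indep_vars (\<lambda>_. count_space UNIV) D {..<n}"
    unfolding D_def using ts_nonneg ts_step by (intro indep_increments) auto
  have "prob {\<omega>\<in>space M. increments (map (\<lambda>t. X t \<omega>) ts) = ds} =
      prob {\<omega>\<in>space M. \<forall>i\<in>{..<n}. D i \<omega> = int (ds ! i)}"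
    using AE_increments_eq_iff[OF strict_sorted_imp_sorted[OF sorted] nonneg True] indep nonneg
    unfolding indep_vars_def n_def D_def
    by (intro measure_eq_AE events_Collect_eq measurable_increments_X sets.sets_Collect_finite_All)
      auto
  also have "\<dots> = (\<Prod>i<n. prob {\<omega>\<in>space M. D i \<omega> = int (ds ! i)})"
    using indep by (rule prob_indep_vars_all_eq) simp
  also have "\<dots> = (\<Prod>i<n. pmf (marginal (ts ! Suc i - ts ! i)) (ds ! i))"
    unfolding D_def using ts_nonneg ts_step
    by (intro prod.cong refl prob_increment) (auto intro: less_imp_le)
  also have "\<dots> = pmf (indep_list_pmf (map marginal (increments ts))) ds"
    using True by (simp add: pmf_indep_list_pmf nth_increments n_def)
  finally show ?thesis .
qed

lemma distr_increments:
  assumes "ts \<noteq> []" "sorted_wrt (<) ts" "\<forall>t\<in>set ts. 0 \<le> t"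
  shows "distr M (count_space UNIV) (\<lambda>\<omega>. increments (map (\<lambda>t. X t \<omega>) ts)) =
    measure_pmf (indep_list_pmf (map marginal (increments ts)))"
proof (rule measure_eqI_countable[where A=UNIV])
  fix ds
  have "emeasure (distr M (count_space UNIV) (\<lambda>\<omega>. increments (map (\<lambda>t. X t \<omega>) ts))) {ds} =
      prob {\<omega>\<in>space M. increments (map (\<lambda>t. X t \<omega>) ts) = ds}"
    using measurable_increments_X[OF assms(3)]
    by (simp add: emeasure_distr emeasure_eq_measure vimage_def Int_def conj_commute)
  then show "emeasure (distr M (count_space UNIV) (\<lambda>\<omega>. increments (map (\<lambda>t. X t \<omega>) ts))) {ds} =
      emeasure (measure_pmf (indep_list_pmf (map marginal (increments ts)))) {ds}"
    by (simp add: prob_increments[OF assms] emeasure_pmf_single)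
qed auto

lemma fdd_eq_map_increments:
  assumes sorted: "sorted_wrt (<) (0 # us)" and ts: "\<forall>t\<in>set ts. t = 0 \<or> t \<in> set us"
  shows "fdd M X ts = measure_pmf (map_pmf (\<lambda>ds. values_at us (partial_sums ds) ts)
    (indep_list_pmf (map marginal (increments (0 # us)))))"
proof -
  have nonneg: "\<forall>t\<in>set (0 # us). 0 \<le> t"
    using sorted by auto
  have "AE \<omega> in M. map (\<lambda>t. X t \<omega>) ts =
      values_at us (partial_sums (increments (map (\<lambda>t. X t \<omega>) (0 # us)))) ts"
    using AE_sorted_X[OF nonneg strict_sorted_imp_sorted[OF sorted]] AE_X_0
  proof eventually_elim
    case (elim \<omega>)
    then have "partial_sums (increments (map (\<lambda>t. X t \<omega>) (0 # us))) = map (\<lambda>t. X t \<omega>) us"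
      using partial_sums_increments[of "X 0 \<omega>" "map (\<lambda>t. X t \<omega>) us"] by simp
    then show ?case
      using ts elim(2) by (metis values_at_map)
  qed
  then have "fdd M X ts = distr M (count_space UNIV)
      ((\<lambda>ds. values_at us (partial_sums ds) ts) \<circ> (\<lambda>\<omega>. increments (map (\<lambda>t. X t \<omega>) (0 # us))))"
    unfolding fdd_def using ts nonneg
    by (intro distr_cong_AE measurable_X_list measurable_comp[OF measurable_increments_X]) auto
  also have "\<dots> = distr (distr M (count_space UNIV) (\<lambda>\<omega>. increments (map (\<lambda>t. X t \<omega>) (0 # us))))
      (count_space UNIV) (\<lambda>ds. values_at us (partial_sums ds) ts)"
    using nonneg by (intro distr_distr[symmetric] measurable_increments_X) auto
  finally show ?thesis
    unfolding distr_increments[OF list.distinct(2) sorted nonneg] map_pmf_rep_eq .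
qed

lemma fdd_single: "0 \<le> t \<Longrightarrow> fdd M X [t] = measure_pmf (map_pmf (\<lambda>x. [x]) (marginal t))"
  unfolding fdd_def measure_pmf_marginal map_pmf_rep_eq
  by (subst distr_distr) (auto simp: o_def measurable_X)

lemma marginal_add:
  assumes "0 \<le> t" "0 \<le> u"
  shows "marginal (t + u) = map_pmf (\<lambda>(x, y). x + y) (pair_pmf (marginal t) (marginal u))"
proof (cases "t = 0 \<or> u = 0")
  case True
  then show ?thesis
    by (auto simp: marginal_0 pair_return_pmf1 pair_return_pmf2 pmf.map_comp o_def)
next
  case False
  with assms have "sorted_wrt (<) [0, t, t + u]" "t \<noteq> t + u"
    by auto
  then have "measure_pmf (map_pmf (\<lambda>x. [x]) (marginal (t + u))) =
      measure_pmf (map_pmf (\<lambda>ds. values_at [t, t + u] (partial_sums ds) [t + u])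
        (indep_list_pmf [marginal t, marginal u]))"
    using assms fdd_eq_map_increments[of "[t, t + u]" "[t + u]"] fdd_single[of "t + u"] by simp
  also have "\<dots> = measure_pmf (map_pmf (\<lambda>x. [x])
      (map_pmf (\<lambda>(x, y). x + y) (pair_pmf (marginal t) (marginal u))))"
    using \<open>t \<noteq> t + u\<close>
    by (simp add: indep_list_pmf_Cons_pair pair_return_pmf2 pair_map_pmf2 pmf.map_comp o_def
        values_at_def case_prod_unfold del: indep_list_pmf.simps(2))
  finally show ?thesis
    by (simp add: measure_pmf_inject map_pmf_inj_eq inj_def)
qed

lemma pgf_marginal_add:
  assumes "0 \<le> t" "0 \<le> u" "\<bar>s\<bar> \<le> 1"
  shows "pgf (measure_pmf (marginal (t + u))) s =
    pgf (measure_pmf (marginal t)) s * pgf (measure_pmf (marginal u)) s"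
  using assms by (simp add: marginal_add pgf_sum_pair_pmf)

lemma pgf_marginal_eq_powr:
  assumes "0 \<le> s" "s \<le> 1" "0 < t"
  shows "pgf (measure_pmf (marginal t)) s = pgf (measure_pmf (marginal 1)) s powr t"
proof -
  interpret unit_interval_semigroup "\<lambda>t. pgf (measure_pmf (marginal t)) s"
    using assms by unfold_locales (simp_all add: pgf_marginal_add pgf_nonneg pgf_le_1)
  show ?thesis
    using eq_powr[OF \<open>0 < t\<close>] .
qed

lemma semi_selfsimilar_imp_marginal_scaling:
  assumes "semi_selfsimilar M X a H" "0 < a" "0 \<le> t"
  shows "marginal (a * t) = bind_pmf (marginal t) (binomial_thin (a powr H))"
proof -
  have "fdd M X [a * t] = fdd M X [t] \<bind> (\<lambda>xs. measure_pmf (thin_vec (a powr H) xs))"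
    using spec[OF assms(1)[unfolded semi_selfsimilar_def], of "[t]"] assms(3) by simp
  also have "\<dots> = measure_pmf (map_pmf (\<lambda>x. [x]) (bind_pmf (marginal t) (binomial_thin (a powr H))))"
    using assms(3) by (simp add: fdd_single measure_pmf_bind[symmetric] bind_map_pmf thin_vec_single
        map_bind_pmf)
  finally show ?thesis
    using assms(2,3) by (simp add: fdd_single measure_pmf_inject map_pmf_inj_eq inj_def)
qed

lemma marginal_scaling_imp_semi_selfsimilar:
  assumes "0 < a"
    and scaling: "\<And>t. 0 \<le> t \<Longrightarrow> marginal (a * t) = bind_pmf (marginal t) (binomial_thin (a powr H))"
  shows "semi_selfsimilar M X a H"
  unfolding semi_selfsimilar_def
proof (intro allI impI)
  fix ts :: "real list"
  assume nonneg: "\<forall>t\<in>set ts. 0 \<le> t"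
  define c where "c = a powr H"
  define us where "us = sorted_list_of_set {t\<in>set ts. 0 < t}"
  define P where "P = indep_list_pmf (map marginal (increments (0 # us)))"
  define F :: "nat list \<Rightarrow> nat list" where "F = (\<lambda>ds. values_at us (partial_sums ds) ts)"
  have sorted: "sorted_wrt (<) (0 # us)" and ts: "\<forall>t\<in>set ts. t = 0 \<or> t \<in> set us"
    using nonneg by (auto simp: us_def strict_sorted_list_of_set)
  then have sorted_scaled: "sorted_wrt (<) (0 # map ((*) a) us)"
    using \<open>0 < a\<close> by (auto simp: sorted_wrt_map elim!: sorted_wrt_mono_rel[rotated])
  have ts_scaled: "\<forall>t\<in>set (map ((*) a) ts). t = 0 \<or> t \<in> set (map ((*) a) us)"
    using ts by auto
  have scaled_values: "values_at (map ((*) a) us) zs (map ((*) a) ts) = values_at us zs ts"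
    for zs :: "nat list"
    using \<open>0 < a\<close> by (intro values_at_map_inj) (auto simp: inj_def)
  have "increments (0 # map ((*) a) us) = map ((*) a) (increments (0 # us))"
    using increments_map_mult[of a "0 # us"] by simp
  then have "indep_list_pmf (map marginal (increments (0 # map ((*) a) us))) =
      indep_list_pmf (map (\<lambda>t. bind_pmf (marginal t) (binomial_thin c)) (increments (0 # us)))"
    using increments_nonneg[OF strict_sorted_imp_sorted[OF sorted]]
    by (simp only: map_map)
      (intro arg_cong[where f=indep_list_pmf] map_cong, auto simp: scaling c_def)
  also have "\<dots> = bind_pmf P (\<lambda>ds. indep_list_pmf (map (binomial_thin c) ds))"
    by (simp add: P_def bind_indep_list_pmf o_def)
  finally have "fdd M X (map ((*) a) ts) =
      measure_pmf (bind_pmf P (\<lambda>ds. map_pmf F (indep_list_pmf (map (binomial_thin c) ds))))"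
    using fdd_eq_map_increments[OF sorted_scaled ts_scaled]
    by (simp add: F_def map_bind_pmf scaled_values)
  also have "\<dots> = measure_pmf (bind_pmf P (\<lambda>ds. thin_vec c (F ds)))"
    by (simp add: F_def thin_vec_values_at thin_vec_partial_sums pmf.map_comp o_def)
  also have "\<dots> = fdd M X ts \<bind> (\<lambda>xs. measure_pmf (thin_vec c xs))"
    by (simp add: fdd_eq_map_increments[OF sorted ts] P_def F_def measure_pmf_bind[symmetric]
        bind_map_pmf)
  finally show "fdd M X (map ((*) a) ts) = fdd M X ts \<bind> (\<lambda>xs. measure_pmf (thin_vec (a powr H) xs))"
    by (simp add: c_def)
qed

lemma semi_selfsimilar_iff_marginal_scaling:
  assumes "0 < a"
  shows "semi_selfsimilar M X a H \<longleftrightarrow>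
    (\<forall>t\<ge>0. marginal (a * t) = bind_pmf (marginal t) (binomial_thin (a powr H)))"
proof
  assume "semi_selfsimilar M X a H"
  then show "\<forall>t\<ge>0. marginal (a * t) = bind_pmf (marginal t) (binomial_thin (a powr H))"
    using assms by (simp add: semi_selfsimilar_imp_marginal_scaling)
next
  assume "\<forall>t\<ge>0. marginal (a * t) = bind_pmf (marginal t) (binomial_thin (a powr H))"
  then show "semi_selfsimilar M X a H"
    using assms by (intro marginal_scaling_imp_semi_selfsimilar) auto
qed

lemma marginal_scaling_imp_discrete_semistable:
  assumes "0 < a" "0 < b" "b < 1"
    and scaling: "marginal a = bind_pmf (marginal 1) (binomial_thin b)"
  shows "discrete_semistable a b (measure_pmf (marginal 1))"
proof -
  have eq:
    "pgf (measure_pmf (marginal 1)) s powr a = pgf (measure_pmf (marginal 1)) (1 - b + b * s)"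
    if "0 \<le> s" "s \<le> 1" for s
    using pgf_marginal_eq_powr[OF that \<open>0 < a\<close>] pgf_bind_binomial_thin[of b s "marginal 1"]
      scaling assms(2,3) that by simp
  have "pgf (measure_pmf (marginal 1)) s \<noteq> 0" if "0 \<le> s" "s \<le> 1" for s
  proof
    assume "pgf (measure_pmf (marginal 1)) s = 0"
    then have "pgf (measure_pmf (marginal 1)) (1 - b + b * s) = 0"
      using eq[OF that] by simp
    with pgf_pos[OF thinning_point_bounds[OF assms(2,3) that], of "marginal 1"] show False
      by simp
  qed
  with eq show ?thesis
    unfolding discrete_semistable_def by simp
qed

lemma discrete_semistable_imp_marginal_scaling:
  assumes "0 < a" "0 < b" "b < 1" "0 < t"
    and semistable: "discrete_semistable a b (measure_pmf (marginal 1))"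
  shows "marginal (a * t) = bind_pmf (marginal t) (binomial_thin b)"
proof (rule pgf_inject)
  fix s :: real
  assume s: "0 < s" "s \<le> 1"
  have "pgf (measure_pmf (marginal (a * t))) s = (pgf (measure_pmf (marginal 1)) s powr a) powr t"
    using pgf_marginal_eq_powr[of s "a * t"] s assms(1,4) by (simp add: powr_powr)
  also have "\<dots> = pgf (measure_pmf (marginal 1)) (1 - b + b * s) powr t"
    using semistable s unfolding discrete_semistable_def by simp
  also have "\<dots> = pgf (measure_pmf (bind_pmf (marginal t) (binomial_thin b))) s"
    using pgf_marginal_eq_powr[of "1 - b + b * s" t] thinning_point_bounds[OF assms(2,3), of s]
      pgf_bind_binomial_thin[of b s "marginal t"] s assms(2-4) by simp
  finally show "pgf (measure_pmf (marginal (a * t))) s =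
      pgf (measure_pmf (bind_pmf (marginal t) (binomial_thin b))) s" .
qed

lemma marginal_scaling_iff_discrete_semistable:
  assumes "0 < a" "0 < b" "b < 1"
  shows "(\<forall>t\<ge>0. marginal (a * t) = bind_pmf (marginal t) (binomial_thin b)) \<longleftrightarrow>
    discrete_semistable a b (measure_pmf (marginal 1))"
proof
  assume "\<forall>t\<ge>0. marginal (a * t) = bind_pmf (marginal t) (binomial_thin b)"
  then show "discrete_semistable a b (measure_pmf (marginal 1))"
    by (intro marginal_scaling_imp_discrete_semistable[OF assms])
      (metis mult.right_neutral zero_le_one)
next
  assume semistable: "discrete_semistable a b (measure_pmf (marginal 1))"
  show "\<forall>t\<ge>0. marginal (a * t) = bind_pmf (marginal t) (binomial_thin b)"
  proof (intro allI impI)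
    fix t :: real
    assume "0 \<le> t"
    then consider "t = 0" | "0 < t"
      by linarith
    then show "marginal (a * t) = bind_pmf (marginal t) (binomial_thin b)"
    proof cases
      case 1
      then show ?thesis
        by (simp add: marginal_0 bind_return_pmf binomial_thin_def)
    next
      case 2
      then show ?thesis
        using discrete_semistable_imp_marginal_scaling[OF assms _ semistable] by simp
    qed
  qed
qed

end

theorem theorem2p2:
  fixes M :: "'a measure" and X :: "real \<Rightarrow> 'a \<Rightarrow> nat" and a \<alpha> b :: real
  assumes "prob_space M"
    and "0 < a" and "a < 1"
    and "0 < \<alpha>" and "\<alpha> \<le> 1"
    and "b = a powr (1 / \<alpha>)"
    and "levy_process M X"
  shows "semi_selfsimilar M X a (1 / \<alpha>) \<longleftrightarrow>
         discrete_semistable a b (distr M (count_space UNIV) (X 1))"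
proof -
  interpret nat_levy_process M X
    by (simp add: nat_levy_process_def nat_levy_process_axioms_def assms(1,7))
  have "0 < b" "b < 1"
    using assms(2-4,6) powr_less_mono2[of "1 / \<alpha>" a 1] by auto
  moreover have "distr M (count_space UNIV) (X 1) = measure_pmf (marginal 1)"
    by (simp add: measure_pmf_marginal)
  ultimately show ?thesis
    using semi_selfsimilar_iff_marginal_scaling[OF assms(2)]
      marginal_scaling_iff_discrete_semistable[OF assms(2)] assms(6)
    by simp
qed

end
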